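(* Let $n\ge 1$ be an integer and let $f:\mathbb{R}\to\mathbb{R}$ be a discontinuous additive function whose graph $G(f)$ is connected. Then $F(x)=x^{n-1}f(x)$ is a discontinuous $n$-monomial function whose graph $G(F)=\{(x,F(x)):x\in\mathbb{R}\}$ is connected.
   Context: For $h\in\mathbb{R}$, $\Delta_h f(x)=f(x+h)-f(x)$ and $\Delta_h^{n}=\Delta_h\circ\Delta_h^{n-1}$. A function $f:\mathbb{R}\to\mathbb{R}$ is an $n$-monomial function if $\frac{1}{n!}\Delta_h^n f(x)=f(h)$ for all $x,h\in\mathbb{R}$. An additive function satisfies $f(x+y)=f(x)+f(y)$ for all $x,y$. The graph of a function $g$ is $G(g)=\{(x,g(x))\}\subseteq\mathbb{R}^2$. *)

theory Defs
  imports "HOL-Analysis.Analysis"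
begin

definition diff_op :: "real \<Rightarrow> (real \<Rightarrow> real) \<Rightarrow> (real \<Rightarrow> real)" where
  "diff_op h f = (\<lambda>x. f (x + h) - f x)"

definition monomial_fun :: "nat \<Rightarrow> (real \<Rightarrow> real) \<Rightarrow> bool" where
  "monomial_fun n f \<longleftrightarrow> (\<forall>x h. (1 / fact n) * (diff_op h ^^ n) f x = f h)"

definition additive_fun :: "(real \<Rightarrow> real) \<Rightarrow> bool" where
  "additive_fun f \<longleftrightarrow> (\<forall>x y. f (x + y) = f x + f y)"

definition graph :: "(real \<Rightarrow> real) \<Rightarrow> (real \<times> real) set" where
  "graph g = {(x, g x) | x. True}"

end

theory Submission
  imports Defs
begin

(*
  Let f be additive and F x = x^(n-1) * f x with n >= 1.

  The iterated difference (diff_op h ^^ n) g x only depends on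
  the values of g at the points x + k*h, k = 0..n.  On these points additivity
  gives f (x + k*h) = f x + k * f h, so for h \<noteq> 0 the function F agrees there
  with the polynomial a*t^(n-1) + b*t^n, where b = f h / h.  Since the n-th
  difference is linear, kills powers t^j with j < n and sends t^n to n! * h^n,
  we get (1/n!) (diff_op h ^^ n) F x = b * h^n = F h.  For h = 0 both sides are 0.

  Discontinuity.  If F were continuous, f = F / x^(n-1) would be continuous at 1,
  and an additive function continuous at one point is continuous everywhere.

  Connectedness.  graph F is the image of graph f under the continuous map
  (x, y) \<mapsto> (x, x^(n-1) * y).
*)

lemma diff_op_funpow_sum:
  "(diff_op h ^^ n) (\<lambda>t. \<Sum>i\<in>A. c i * g i t) x = (\<Sum>i\<in>A. c i * (diff_op h ^^ n) (g i) x)"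
proof (induction n arbitrary: g x)
  case 0
  then show ?case by simp
next
  case (Suc n)
  have "diff_op h (\<lambda>t. \<Sum>i\<in>A. c i * g i t) = (\<lambda>t. \<Sum>i\<in>A. c i * diff_op h (g i) t)"
    by (simp add: diff_op_def sum_subtractf[symmetric] algebra_simps)
  then show ?case by (simp add: funpow_Suc_right Suc.IH del: funpow.simps)
qed

lemma diff_op_funpow_lincomb:
  "(diff_op h ^^ n) (\<lambda>t. a * g t + b * k t) x = a * (diff_op h ^^ n) g x + b * (diff_op h ^^ n) k x"
  using diff_op_funpow_sum[where c = "\<lambda>i. if i then b else a" and g = "\<lambda>i. if i then k else g"
      and A = UNIV and h = h and n = n and x = x]
  by (simp add: UNIV_bool)

lemma diff_op_power:
  "diff_op h (\<lambda>t. t ^ j) = (\<lambda>t. \<Sum>i<j. (of_nat (j choose i) * h ^ (j - i)) * t ^ i)"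
proof
  fix t :: real
  have "(t + h) ^ j = (\<Sum>i\<le>j. of_nat (j choose i) * t ^ i * h ^ (j - i))"
    by (simp add: binomial_ring)
  also have "\<dots> = (\<Sum>i<j. of_nat (j choose i) * t ^ i * h ^ (j - i)) + t ^ j"
    by (simp add: lessThan_Suc_atMost[symmetric])
  finally show "diff_op h (\<lambda>t. t ^ j) t = (\<Sum>i<j. (of_nat (j choose i) * h ^ (j - i)) * t ^ i)"
    by (simp add: diff_op_def algebra_simps)
qed

lemma diff_op_funpow_power:
  "j \<le> n \<Longrightarrow> (diff_op h ^^ n) (\<lambda>t. t ^ j) x = (if j = n then fact n * h ^ n else 0)"
proof (induction n arbitrary: j x)
  case 0
  then show ?case by simp
next
  case (Suc n)
  have "(diff_op h ^^ Suc n) (\<lambda>t. t ^ j) x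
      = (\<Sum>i<j. (of_nat (j choose i) * h ^ (j - i)) * (diff_op h ^^ n) (\<lambda>t. t ^ i) x)"
    by (simp add: funpow_Suc_right diff_op_power diff_op_funpow_sum del: funpow.simps)
  also have "\<dots> = (\<Sum>i<j. if i = n then of_nat (j choose n) * h ^ (j - n) * (fact n * h ^ n) else 0)"
    using Suc.prems by (intro sum.cong refl) (simp add: Suc.IH)
  also have "\<dots> = (if j = Suc n then fact (Suc n) * h ^ Suc n else 0)"
    using Suc.prems by (cases "j = Suc n") simp_all
  finally show ?case .
qed

lemma diff_op_funpow_agree:
  "(\<And>k. k \<le> n \<Longrightarrow> g (x + real k * h) = g' (x + real k * h)) \<Longrightarrow>
   (diff_op h ^^ n) g x = (diff_op h ^^ n) g' x"
proof (induction n arbitrary: g g' x)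
  case 0
  then show ?case using "0.prems"[of 0] by simp
next
  case (Suc n)
  have "(diff_op h ^^ n) (diff_op h g) x = (diff_op h ^^ n) (diff_op h g') x"
  proof (rule Suc.IH)
    fix k assume "k \<le> n"
    then have "g (x + real k * h) = g' (x + real k * h)"
      "g (x + real (Suc k) * h) = g' (x + real (Suc k) * h)"
      using Suc.prems[of k] Suc.prems[of "Suc k"] by auto
    then show "diff_op h g (x + real k * h) = diff_op h g' (x + real k * h)"
      by (simp add: diff_op_def algebra_simps)
  qed
  then show ?case by (simp add: funpow_Suc_right del: funpow.simps)
qed

lemma diff_op_funpow_step_zero:
  assumes "n \<ge> 1"
  shows "(diff_op 0 ^^ n) g x = 0"
proof -
  obtain m where n: "n = Suc m" using assms by (cases n) auto
  have "diff_op 0 g = (\<lambda>t. 0 * g t + 0 * g t)"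
    by (simp add: diff_op_def)
  then have "(diff_op 0 ^^ n) g x = (diff_op 0 ^^ m) (\<lambda>t. 0 * g t + 0 * g t) x"
    by (simp only: n funpow_Suc_right o_apply)
  also have "\<dots> = 0 * (diff_op 0 ^^ m) g x + 0 * (diff_op 0 ^^ m) g x"
    by (rule diff_op_funpow_lincomb)
  finally show ?thesis by simp
qed

lemma additive_zero:
  assumes "additive_fun f"
  shows "f 0 = 0"
proof -
  have "f (0 + 0) = f 0 + f 0" using assms by (simp only: additive_fun_def)
  then show ?thesis by simp
qed

lemma additive_progression:
  assumes "additive_fun f"
  shows "f (x + real k * h) = f x + real k * f h"
proof (induction k)
  case 0
  then show ?case using additive_zero[OF assms] assms by (simp add: additive_fun_def)
next
  case (Suc k)
  have "f (x + real (Suc k) * h) = f ((x + real k * h) + h)" by (simp add: algebra_simps)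
  also have "\<dots> = f (x + real k * h) + f h" using assms by (simp add: additive_fun_def)
  finally show ?case using Suc by (simp add: algebra_simps)
qed

text \<open>An additive function continuous at a single point is continuous everywhere,
  since it is a translate of itself: f t = f (t + (x0 - y)) - f (x0 - y).\<close>
lemma additive_continuous_at_imp_continuous:
  assumes "additive_fun f" and "isCont f x0"
  shows "continuous_on UNIV f"
proof -
  have "isCont f y" for y
  proof -
    have "isCont (\<lambda>t. f (t + (x0 - y)) - f (x0 - y)) y"
      using assms(2) by (intro continuous_intros isCont_o2[where f = "\<lambda>t. t + (x0 - y)"]) auto
    moreover have "(\<lambda>t. f (t + (x0 - y)) - f (x0 - y)) = f"
      using assms(1) by (auto simp: additive_fun_def)
    ultimately show ?thesis by simp
  qed
  then show ?thesis by (simp add: continuous_at_imp_continuous_on)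
qed

lemma additive_times_power_on_progression:
  assumes "additive_fun f" and "n \<ge> 1" and "h \<noteq> 0"
  shows "(x + real k * h) ^ (n - 1) * f (x + real k * h)
       = (f x - x * f h / h) * (x + real k * h) ^ (n - 1) + f h / h * (x + real k * h) ^ n"
proof -
  have "(x + real k * h) ^ n = (x + real k * h) ^ (n - 1) * (x + real k * h)"
    using assms(2) by (simp add: power_eq_if)
  then show ?thesis
    unfolding additive_progression[OF assms(1)] using assms(3)
    by (simp add: field_simps)
qed

lemma additive_times_power_monomial:
  assumes "additive_fun f" and "n \<ge> 1"
  shows "monomial_fun n (\<lambda>x. x ^ (n - 1) * f x)"
  unfolding monomial_fun_def
proof (intro allI)
  fix x h :: real
  show "1 / fact n * (diff_op h ^^ n) (\<lambda>x. x ^ (n - 1) * f x) x = h ^ (n - 1) * f h"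
  proof (cases "h = 0")
    case True
    then show ?thesis
      using assms by (simp add: diff_op_funpow_step_zero additive_zero)
  next
    case False
    define a where "a = f x - x * f h / h"
    define b where "b = f h / h"
    have "(diff_op h ^^ n) (\<lambda>x. x ^ (n - 1) * f x) x
        = (diff_op h ^^ n) (\<lambda>t. a * t ^ (n - 1) + b * t ^ n) x"
      using additive_times_power_on_progression[OF assms False] unfolding a_def b_def
      by (intro diff_op_funpow_agree) simp
    also have "\<dots> = b * (fact n * h ^ n)"
      using assms(2) by (simp add: diff_op_funpow_lincomb diff_op_funpow_power)
    finally show ?thesis using False assms(2) unfolding b_def
      by (simp add: field_simps power_eq_if)
  qed
qed

text \<open>Multiplying an additive function by x^m preserves discontinuity: away from 0
  the factor can be divided out, and continuity at 1 already forces continuity.\<close>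
lemma additive_times_power_discontinuous:
  assumes "additive_fun f" and "\<not> continuous_on UNIV f"
  shows "\<not> continuous_on UNIV (\<lambda>x. x ^ m * f x)"
proof
  assume "continuous_on UNIV (\<lambda>x. x ^ m * f x)"
  then have "isCont (\<lambda>x. x ^ m * f x) 1"
    by (simp add: continuous_on_eq_continuous_at)
  then have "isCont (\<lambda>x. x ^ m * f x / x ^ m) 1"
    by (rule isCont_divide) (auto intro!: continuous_intros)
  moreover have "(\<lambda>x. x ^ m * f x / x ^ m) = f"
    using additive_zero[OF assms(1)] by (auto simp: fun_eq_iff)
  ultimately have "isCont f 1" by (simp only:)
  then show False
    using additive_continuous_at_imp_continuous[OF assms(1)] assms(2) by blast
qed

lemma connected_graph_times_continuous:
  assumes "connected (graph f)" and "continuous_on UNIV g"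
  shows "connected (graph (\<lambda>x. g x * f x))"
proof -
  have "graph (\<lambda>x. g x * f x) = (\<lambda>p. (fst p, g (fst p) * snd p)) ` graph f"
    unfolding graph_def by (auto simp: image_iff)
  moreover have "continuous_on (graph f) (\<lambda>p. (fst p, g (fst p) * snd p))"
  proof -
    have "continuous_on (graph f) (\<lambda>p. g (fst p))"
      by (rule continuous_on_compose2[OF assms(2)]) (auto intro: continuous_intros)
    then show ?thesis by (intro continuous_intros)
  qed
  ultimately show ?thesis
    using connected_continuous_image assms(1) by metis
qed

theorem mainTheorem3:
  fixes n :: nat and f :: "real \<Rightarrow> real"
  assumes "n \<ge> 1"
    and "additive_fun f"
    and "\<not> continuous_on UNIV f"
    and "connected (graph f)"
  shows "monomial_fun n (\<lambda>x. x ^ (n - 1) * f x)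
       \<and> \<not> continuous_on UNIV (\<lambda>x. x ^ (n - 1) * f x)
       \<and> connected (graph (\<lambda>x. x ^ (n - 1) * f x))"
proof (intro conjI)
  show "monomial_fun n (\<lambda>x. x ^ (n - 1) * f x)"
    using additive_times_power_monomial[OF assms(2,1)] .
  show "\<not> continuous_on UNIV (\<lambda>x. x ^ (n - 1) * f x)"
    using additive_times_power_discontinuous[OF assms(2,3)] .
  show "connected (graph (\<lambda>x. x ^ (n - 1) * f x))"
    using connected_graph_times_continuous[OF assms(4)] by (simp add: continuous_on_power continuous_on_id)
qed

end
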